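(* Let $d \ge 1$ and let $\beta = (\beta_1,\ldots,\beta_{d+1})$ be an optimal solution of the problem of minimizing $\beta_1\cdots\beta_d$ over all $(\beta_1,\dots,\beta_{d+1}) \in \mathbb{R}^{d+1}$ satisfying $\beta_1 \ge \cdots \ge \beta_{d+1} \ge 0$, $\beta_1+\cdots+\beta_{d+1}=1$, and, for every $t \in \{1,\dots,d\}$, $\prod_{i=1}^t (\beta_i - \beta_{d+1}) \le \sum_{j=t+1}^{d+1} (\beta_j - \beta_{d+1}) + (d+1)\beta_{d+1}$. Then there exists $\ell \in \{1,\dots,d\}$ such that (a) $\beta_1 \cdots \beta_d = f_\ell(\beta_{d+1})$, and (b) $\frac{1}{(d+1)(s_{\ell+1}-1)} \le \beta_{d+1} \le \frac{1}{(d+1)(s_\ell-1)}$.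
   Context: The Sylvester sequence is defined by $s_1 := 2$ and $s_i := 1 + s_1 s_2 \cdots s_{i-1}$ for $i \ge 2$. For $\ell \in \{1,\dots,d\}$ and $\alpha\in\mathbb{R}$, $f_\ell(\alpha) := \Bigl(\prod_{i=1}^{\ell-1}\bigl(\tfrac{1}{s_i}+\alpha\bigr)\Bigr)\bigl(\tfrac{1}{s_\ell-1} - d\alpha\bigr)\alpha^{d-\ell}$ (the empty product being $1$). *)

theory Defs
  imports Complex_Main
begin

fun sylv_list :: "nat \<Rightarrow> nat list" where
  "sylv_list 0 = []"
| "sylv_list (Suc n) = sylv_list n @ [1 + prod_list (sylv_list n)]"

(* Sylvester sequence s_i for i >= 1 (s_1 = 2) *)
definition sylv :: "nat \<Rightarrow> nat" where
  "sylv i = sylv_list i ! (i - 1)"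

definition fl :: "nat \<Rightarrow> nat \<Rightarrow> real \<Rightarrow> real" where
  "fl d l \<alpha> = (\<Prod>i=1..<l. 1 / real (sylv i) + \<alpha>)
       * (1 / (real (sylv l) - 1) - real d * \<alpha>) * \<alpha> ^ (d - l)"

definition feasible :: "nat \<Rightarrow> (nat \<Rightarrow> real) \<Rightarrow> bool" where
  "feasible d \<beta> \<longleftrightarrow>
     (\<forall>i\<in>{1..d}. \<beta> i \<ge> \<beta> (i + 1)) \<and> \<beta> (d + 1) \<ge> 0 \<and>
     (\<Sum>i=1..d+1. \<beta> i) = 1 \<and>
     (\<forall>t\<in>{1..d}. (\<Prod>i=1..t. \<beta> i - \<beta> (d + 1))
        \<le> (\<Sum>j=t+1..d+1. \<beta> j - \<beta> (d + 1)) + real (d + 1) * \<beta> (d + 1))"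

definition optimal :: "nat \<Rightarrow> (nat \<Rightarrow> real) \<Rightarrow> bool" where
  "optimal d \<beta> \<longleftrightarrow> feasible d \<beta> \<and>
     (\<forall>\<gamma>. feasible d \<gamma> \<longrightarrow> (\<Prod>i=1..d. \<beta> i) \<le> (\<Prod>i=1..d. \<gamma> i))"

end

(*
  Put x_i = beta_i - beta_(d+1) and v = (d+1) beta_(d+1).  Feasibility then says that x is
  decreasing and nonnegative with sum 1 - v and that x_1...x_t + x_1 + ... + x_t <= 1 for all t.
  A majorization inequality (for decreasing positive a, if the partial sums of b dominate those
  of a and the totals agree, then prod b <= prod a) turns these constraints into the
  Egyptian-fraction bound x_1 + ... + x_t <= 1 - e_t, where e_t = 1/(s_1...s_t) is the gap left
  by 1/s_1 + ... + 1/s_t.  So e_d <= v, and v lies between consecutive gaps e_l <= v <= e_(l-1).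
  The greedy point (1/s_1, ..., 1/s_(l-1), e_(l-1) - v, 0, ..., 0) is then feasible, its shifted
  product is f_l(beta_(d+1)), and its partial sums dominate those of x: optimality and
  majorization give the two inequalities between beta_1...beta_d and f_l(beta_(d+1)).
*)
theory Submission
  imports Defs
begin

lemma sylv_Suc_prod_list: "sylv (Suc n) = 1 + prod_list (sylv_list n)"
proof -
  have "length (sylv_list n) = n"
    by (induction n) auto
  then show ?thesis
    unfolding sylv_def by (simp add: nth_append)
qed

lemma sylv_Suc: "sylv (Suc n) = 1 + (\<Prod>i=1..n. sylv i)"
proof -
  have "prod_list (sylv_list n) = (\<Prod>i=1..n. sylv i)"
    by (induction n) (auto simp: sylv_Suc_prod_list)
  then show ?thesis
    by (simp add: sylv_Suc_prod_list)
qed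

lemma prod_sylv_ge_1: "1 \<le> (\<Prod>i=1..n. sylv i)"
  by (induction n) (simp_all add: sylv_Suc)

lemma sylv_ge_2: "1 \<le> i \<Longrightarrow> 2 \<le> sylv i"
  using prod_sylv_ge_1 by (cases i) (auto simp: sylv_Suc)

lemma sylv_mono_Suc: "1 \<le> i \<Longrightarrow> sylv i \<le> sylv (Suc i)"
proof -
  assume "1 \<le> i"
  then have "sylv i \<le> (\<Prod>j=1..i. sylv j)"
    using prod_sylv_ge_1[of "i - 1"] by (cases i) (simp_all add: prod.cl_ivl_Suc)
  then show ?thesis
    by (simp add: sylv_Suc)
qed

lemma inverse_sylv_antimono: "1 \<le> i \<Longrightarrow> 1 / real (sylv (Suc i)) \<le> 1 / real (sylv i)"
  using sylv_mono_Suc[of i] sylv_ge_2[of i] by (simp add: frac_le)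

definition sylv_gap :: "nat \<Rightarrow> real" where
  "sylv_gap n = (\<Prod>i=1..n. 1 / real (sylv i))"

lemma sylv_gap_0 [simp]: "sylv_gap 0 = 1"
  by (simp add: sylv_gap_def)

lemma sylv_gap_pos: "0 < sylv_gap n"
  unfolding sylv_gap_def using sylv_ge_2 by (intro prod_pos) fastforce

lemma real_sylv_Suc: "real (sylv (Suc n)) = 1 + 1 / sylv_gap n"
  by (simp add: sylv_Suc sylv_gap_def prod_dividef)

lemma sylv_gap_Suc: "sylv_gap (Suc n) = sylv_gap n / real (sylv (Suc n))"
  by (simp add: sylv_gap_def)

lemma sylv_gap_Suc_eq: "sylv_gap (Suc n) = sylv_gap n ^ 2 / (1 + sylv_gap n)"
  using sylv_gap_pos[of n] by (simp add: sylv_gap_Suc real_sylv_Suc field_simps power2_eq_square)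

lemma inverse_sylv_Suc: "1 / real (sylv (Suc n)) = sylv_gap n - sylv_gap (Suc n)"
  using sylv_gap_pos[of n] by (simp add: sylv_gap_Suc real_sylv_Suc field_simps)

lemma sum_inverse_sylv: "(\<Sum>i=1..n. 1 / real (sylv i)) = 1 - sylv_gap n"
  by (induction n) (simp_all add: inverse_sylv_Suc)

lemma sylv_gap_antimono: "m \<le> n \<Longrightarrow> sylv_gap n \<le> sylv_gap m"
proof (rule lift_Suc_antimono_le)
  show "sylv_gap (Suc k) \<le> sylv_gap k" for k
    using inverse_sylv_Suc[of k] by (metis diff_ge_0_iff_ge divide_nonneg_nonneg of_nat_0_le_iff zero_le_one)
qed

lemma sylv_gap_bracket:
  assumes "1 \<le> d" and "sylv_gap d \<le> v" and "v \<le> 1"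
  shows "\<exists>l\<in>{1..d}. sylv_gap l \<le> v \<and> v \<le> sylv_gap (l - 1)"
  using assms
proof (induction d rule: dec_induct)
  case base
  then show ?case by auto
next
  case (step k)
  then show ?case
    by (cases "sylv_gap k \<le> v") force+
qed

lemma inverse_sylv_minus_1: "1 / (real (sylv (Suc n)) - 1) = sylv_gap n"
  by (simp add: real_sylv_Suc)

lemma inverse_mult_sylv_minus_1:
  "1 \<le> l \<Longrightarrow> 1 / (c * (real (sylv l) - 1)) = sylv_gap (l - 1) / c"
  using inverse_sylv_minus_1[of "l - 1"] by (simp add: divide_divide_eq_left'[symmetric])

lemma sum_mult_le_last_mult_sum:
  fixes c \<delta> :: "nat \<Rightarrow> real"
  assumes "\<And>i. i \<in> {1..<n} \<Longrightarrow> c i \<le> c (Suc i)"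
    and "\<And>k. k \<in> {1..<n} \<Longrightarrow> 0 \<le> (\<Sum>i=1..k. \<delta> i)"
  shows "(\<Sum>i=1..n. c i * \<delta> i) \<le> c n * (\<Sum>i=1..n. \<delta> i)"
  using assms
proof (induction n)
  case 0
  then show ?case by simp
next
  case (Suc n)
  have "(\<Sum>i=1..n. c i * \<delta> i) \<le> c n * (\<Sum>i=1..n. \<delta> i)"
    using Suc by auto
  also have "\<dots> \<le> c (Suc n) * (\<Sum>i=1..n. \<delta> i)"
    using Suc.prems by (cases "n = 0") (auto intro: mult_right_mono)
  finally show ?case
    by (simp add: algebra_simps)
qed

lemma prod_le_prod_if_partial_sums_le:
  fixes a b :: "nat \<Rightarrow> real"
  assumes decreasing: "\<And>i. i \<in> {1..<n} \<Longrightarrow> a (Suc i) \<le> a i"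
    and a_pos: "\<And>i. i \<in> {1..n} \<Longrightarrow> 0 < a i"
    and b_nonneg: "\<And>i. i \<in> {1..n} \<Longrightarrow> 0 \<le> b i"
    and partial: "\<And>k. k \<in> {1..<n} \<Longrightarrow> (\<Sum>i=1..k. a i) \<le> (\<Sum>i=1..k. b i)"
    and total: "(\<Sum>i=1..n. b i) \<le> (\<Sum>i=1..n. a i)"
  shows "(\<Prod>i=1..n. b i) \<le> (\<Prod>i=1..n. a i)"
proof -
  \<comment> \<open>Write b_i = a_i (1 + u_i), use 1 + u <= exp u, and bound the sum of the u_i by Abel
    summation against the increasing weights 1/a_i.\<close>
  define u where "u i = 1 / a i * (b i - a i)" for i
  have "(\<Sum>i=1..n. u i) \<le> 1 / a n * (\<Sum>i=1..n. b i - a i)"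
    unfolding u_def
  proof (rule sum_mult_le_last_mult_sum)
    show "1 / a i \<le> 1 / a (Suc i)" if "i \<in> {1..<n}" for i
      using that decreasing a_pos by (auto intro!: divide_left_mono)
    show "0 \<le> (\<Sum>i=1..k. b i - a i)" if "k \<in> {1..<n}" for k
      using that partial by (simp add: sum_subtractf)
  qed
  also have "\<dots> \<le> 0"
    using a_pos[of n] total by (cases "n = 0") (auto simp: sum_subtractf divide_nonpos_pos)
  finally have u_sum: "(\<Sum>i=1..n. u i) \<le> 0" .
  have prod_a_nonneg: "0 \<le> (\<Prod>i=1..n. a i)"
    by (intro prod_nonneg less_imp_le a_pos)
  have "b i = a i * (1 + u i)" if "i \<in> {1..n}" for i
    using a_pos[OF that] by (simp add: u_def field_simps)
  then have "(\<Prod>i=1..n. b i) = (\<Prod>i=1..n. a i) * (\<Prod>i=1..n. 1 + u i)"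
    by (auto simp: prod.distrib[symmetric] intro!: prod.cong)
  also have "\<dots> \<le> (\<Prod>i=1..n. a i) * exp (\<Sum>i=1..n. u i)"
  proof (intro mult_left_mono)
    have "0 \<le> 1 + u i" if "i \<in> {1..n}" for i
      using a_pos[OF that] b_nonneg[OF that] by (simp add: u_def field_simps)
    then show "(\<Prod>i=1..n. 1 + u i) \<le> exp (\<Sum>i=1..n. u i)"
      by (auto simp: exp_sum intro!: prod_mono)
  qed (fact prod_a_nonneg)
  also have "\<dots> \<le> (\<Prod>i=1..n. a i)"
    using u_sum prod_a_nonneg by (simp add: mult_left_le)
  finally show ?thesis .
qed

lemma sum_le_1_minus_sylv_gap:
  fixes x :: "nat \<Rightarrow> real"
  assumes "\<And>i. i \<in> {1..<n} \<Longrightarrow> x (Suc i) \<le> x i"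
    and "\<And>i. i \<in> {1..n} \<Longrightarrow> 0 \<le> x i"
    and "\<And>t. t \<in> {1..n} \<Longrightarrow> (\<Prod>i=1..t. x i) + (\<Sum>i=1..t. x i) \<le> 1"
  shows "(\<Sum>i=1..n. x i) \<le> 1 - sylv_gap n"
  using assms
proof (induction n rule: less_induct)
  case (less n)
  note decreasing = less.prems(1) and nonneg = less.prems(2) and constraint = less.prems(3)
  have IH: "(\<Sum>i=1..k. x i) \<le> 1 - sylv_gap k" if "k < n" for k
    using less.IH[OF that] less.prems that by force
  show ?case
  proof (rule ccontr)
    assume "\<not> ?case"
    then have sum_gt: "1 - sylv_gap n < (\<Sum>i=1..n. x i)" by simp
    then obtain m where n: "n = Suc m"
      by (cases n) auto
    have "x n \<noteq> 0"
    proof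
      assume "x n = 0"
      then have "(\<Sum>i=1..n. x i) = (\<Sum>i=1..m. x i)" using n by simp
      also have "\<dots> \<le> 1 - sylv_gap m" using IH n by simp
      also have "\<dots> \<le> 1 - sylv_gap n" using sylv_gap_antimono n by simp
      finally show False using sum_gt by simp
    qed
    then have x_pos: "0 < x i" if "i \<in> {1..n}" for i
      using nonneg[of n] nonneg[OF that] that n
        lift_Suc_antimono_le_ivl[of "{1..<n}" x i n] decreasing by fastforce
    \<comment> \<open>The reciprocals 1/s_i dominate x in every proper partial sum but not in the total.\<close>
    have "sylv_gap n \<le> (\<Prod>i=1..n. x i)"
      unfolding sylv_gap_def
    proof (rule prod_le_prod_if_partial_sums_le)
      show "(\<Sum>i=1..k. x i) \<le> (\<Sum>i=1..k. 1 / real (sylv i))" if "k \<in> {1..<n}" for k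
        using IH that unfolding sum_inverse_sylv by simp
      show "(\<Sum>i=1..n. 1 / real (sylv i)) \<le> (\<Sum>i=1..n. x i)"
        using sum_gt unfolding sum_inverse_sylv by simp
    qed (use decreasing x_pos in auto)
    then show False
      using constraint[of n] sum_gt n by simp
  qed
qed

(* The constraints of feasible after the shift x_i = beta_i - beta_(d+1), with
   S = 1 - (d+1) beta_(d+1). *)

definition reduced_feasible :: "nat \<Rightarrow> real \<Rightarrow> (nat \<Rightarrow> real) \<Rightarrow> bool" where
  "reduced_feasible d S x \<longleftrightarrow>
     (\<forall>i\<in>{1..<d}. x (Suc i) \<le> x i) \<and> (\<forall>i\<in>{1..d}. 0 \<le> x i) \<and> (\<Sum>i=1..d. x i) = S \<and>
     (\<forall>t\<in>{1..d}. (\<Prod>i=1..t. x i) + (\<Sum>i=1..t. x i) \<le> 1)"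

lemma feasible_imp_reduced_feasible:
  assumes "feasible d \<beta>"
  shows "reduced_feasible d (1 - real (d + 1) * \<beta> (d + 1)) (\<lambda>i. \<beta> i - \<beta> (d + 1))"
proof -
  define \<alpha> where "\<alpha> = \<beta> (d + 1)"
  have decreasing: "\<And>i. i \<in> {1..d} \<Longrightarrow> \<beta> (Suc i) \<le> \<beta> i"
    using assms unfolding feasible_def by auto
  have nonneg: "0 \<le> \<beta> i - \<alpha>" if "i \<in> {1..d}" for i
    using lift_Suc_antimono_le_ivl[of "{1..d}" \<beta> i "d + 1"] decreasing that
    unfolding \<alpha>_def by fastforce
  have total: "(\<Sum>i=1..d+1. \<beta> i - \<alpha>) = 1 - real (d + 1) * \<alpha>"
    using assms unfolding feasible_def by (simp add: sum_subtractf)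
  have split: "(\<Sum>i=1..d+1. \<beta> i - \<alpha>) = (\<Sum>i=1..t. \<beta> i - \<alpha>) + (\<Sum>i=t+1..d+1. \<beta> i - \<alpha>)"
    if "t \<le> d" for t
    using sum.ub_add_nat[of 1 t "\<lambda>i. \<beta> i - \<alpha>" "d + 1 - t"] that by simp
  have constraint: "(\<Prod>i=1..t. \<beta> i - \<alpha>) + (\<Sum>i=1..t. \<beta> i - \<alpha>) \<le> 1" if "t \<in> {1..d}" for t
    using assms that split[of t] total unfolding feasible_def \<alpha>_def[symmetric] by fastforce
  show ?thesis
    unfolding reduced_feasible_def \<alpha>_def[symmetric]
    using decreasing nonneg constraint total split[of d] by (simp add: \<alpha>_def)
qed

lemma reduced_feasible_imp_feasible:
  assumes "0 \<le> \<alpha>" and "reduced_feasible d (1 - real (d + 1) * \<alpha>) z"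
  shows "feasible d (\<lambda>i. if i \<le> d then z i + \<alpha> else \<alpha>)"
proof -
  have total: "(\<Sum>i=1..d. z i) = 1 - real (d + 1) * \<alpha>"
    and constraint: "\<And>t. t \<in> {1..d} \<Longrightarrow> (\<Prod>i=1..t. z i) + (\<Sum>i=1..t. z i) \<le> 1"
    using assms(2) unfolding reduced_feasible_def by auto
  have "(\<Prod>i=1..t. z i) \<le> (\<Sum>j=t+1..d. z j) + real (d + 1) * \<alpha>" if "t \<in> {1..d}" for t
    using sum.ub_add_nat[of 1 t z "d - t"] that total constraint[OF that] by simp
  then show ?thesis
    using assms unfolding feasible_def reduced_feasible_def
    by (auto simp: sum.distrib algebra_simps)
qed

lemma reduced_feasible_sum_le:
  assumes "reduced_feasible d S x" and "t \<le> d"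
  shows "(\<Sum>i=1..t. x i) \<le> 1 - sylv_gap t"
  by (rule sum_le_1_minus_sylv_gap) (use assms in \<open>auto simp: reduced_feasible_def\<close>)

lemma reduced_feasible_total_bounds:
  assumes "reduced_feasible d (1 - v) x"
  shows "sylv_gap d \<le> v" and "v \<le> 1"
proof -
  show "sylv_gap d \<le> v"
    using reduced_feasible_sum_le[OF assms, of d] assms by (simp add: reduced_feasible_def)
  have "0 \<le> (\<Sum>i=1..d. x i)"
    using assms by (intro sum_nonneg) (simp add: reduced_feasible_def)
  then show "v \<le> 1"
    using assms by (simp add: reduced_feasible_def)
qed

definition sylv_point :: "nat \<Rightarrow> real \<Rightarrow> nat \<Rightarrow> real" where
  "sylv_point l v i =
     (if i < l then 1 / real (sylv i) else if i = l then sylv_gap (l - 1) - v else 0)"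

lemma sum_sylv_point_less: "t < l \<Longrightarrow> (\<Sum>i=1..t. sylv_point l v i) = 1 - sylv_gap t"
  by (simp add: sylv_point_def sum_inverse_sylv[symmetric])

lemma prod_sylv_point_less: "t < l \<Longrightarrow> (\<Prod>i=1..t. sylv_point l v i) = sylv_gap t"
  by (simp add: sylv_point_def sylv_gap_def)

lemma sum_sylv_point_ge:
  assumes "1 \<le> l" and "l \<le> t"
  shows "(\<Sum>i=1..t. sylv_point l v i) = 1 - v"
  using assms(2)
proof (induction t rule: dec_induct)
  case base
  then show ?case
    using assms(1) sum_sylv_point_less[of "l - 1" l v] by (cases l) (simp_all add: sylv_point_def)
next
  case (step k)
  then show ?case by (simp add: sylv_point_def)
qed

lemma sylv_point_nonneg: "v \<le> sylv_gap (l - 1) \<Longrightarrow> 0 \<le> sylv_point l v i"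
  by (simp add: sylv_point_def)

lemma sylv_point_decreasing:
  assumes "1 \<le> i" and "sylv_gap l \<le> v" and "v \<le> sylv_gap (l - 1)"
  shows "sylv_point l v (Suc i) \<le> sylv_point l v i"
proof -
  consider "Suc i < l" | "Suc i = l" | "l < Suc i" by linarith
  then show ?thesis
  proof cases
    case 1
    then show ?thesis using inverse_sylv_antimono[OF assms(1)] by (simp add: sylv_point_def)
  next
    case 2
    then have "sylv_point l v (Suc i) \<le> sylv_gap i - sylv_gap (Suc i)"
      using assms(2) by (auto simp: sylv_point_def)
    also have "\<dots> = 1 / real (sylv (Suc i))"
      by (simp add: inverse_sylv_Suc)
    also have "\<dots> \<le> sylv_point l v i"
      using 2 inverse_sylv_antimono[OF assms(1)] by (auto simp: sylv_point_def)
    finally show ?thesis .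
  next
    case 3
    then show ?thesis
      using sylv_point_nonneg[OF assms(3), of i] by (simp add: sylv_point_def[of l v "Suc i"])
  qed
qed

lemma sylv_point_constraint:
  assumes "1 \<le> l" and "sylv_gap l \<le> v"
  shows "(\<Prod>i=1..t. sylv_point l v i) + (\<Sum>i=1..t. sylv_point l v i) \<le> 1"
proof -
  obtain m where l: "l = Suc m"
    using assms(1) by (cases l) auto
  have v_pos: "0 < v"
    using assms(2) sylv_gap_pos[of l] by linarith
  consider "t < l" | "t = l" | "l < t" by linarith
  then show ?thesis
  proof cases
    case 1
    then show ?thesis using sum_sylv_point_less[OF 1] prod_sylv_point_less[OF 1] by simp
  next
    case 2
    have "sylv_gap m ^ 2 \<le> v * (1 + sylv_gap m)"
      using assms(2) sylv_gap_pos[of m] by (simp add: l sylv_gap_Suc_eq pos_divide_le_eq add_pos_pos)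
    then have "sylv_gap m * (sylv_gap m - v) \<le> v"
      by (simp add: algebra_simps power2_eq_square)
    moreover have "(\<Prod>i=1..t. sylv_point l v i) = sylv_gap m * (sylv_gap m - v)"
      using 2 prod_sylv_point_less[of m l v] by (simp add: l sylv_point_def)
    ultimately show ?thesis
      using 2 sum_sylv_point_ge[OF assms(1), of l v] by simp
  next
    case 3
    then have "Suc l \<in> {1..t}" and "sylv_point l v (Suc l) = 0"
      by (auto simp: sylv_point_def)
    then have "(\<Prod>i=1..t. sylv_point l v i) = 0"
      by (intro prod_zero) auto
    then show ?thesis
      using 3 sum_sylv_point_ge[OF assms(1), of t v] v_pos by linarith
  qed
qed

lemma reduced_feasible_sylv_point:
  assumes "1 \<le> l" and "l \<le> d" and "sylv_gap l \<le> v" and "v \<le> sylv_gap (l - 1)"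
  shows "reduced_feasible d (1 - v) (sylv_point l v)"
  unfolding reduced_feasible_def
  using assms sylv_point_decreasing sylv_point_nonneg sylv_point_constraint sum_sylv_point_ge
  by auto

lemma fl_eq_prod_sylv_point:
  assumes "1 \<le> l" and "l \<le> d"
  shows "fl d l \<alpha> = (\<Prod>i=1..d. sylv_point l (real (d + 1) * \<alpha>) i + \<alpha>)"
proof -
  obtain m where l: "l = Suc m"
    using assms(1) by (cases l) auto
  define z where "z = sylv_point l (real (d + 1) * \<alpha>)"
  have "(\<Prod>i=1..d. z i + \<alpha>) = (\<Prod>i=1..l. z i + \<alpha>) * (\<Prod>i=l+1..d. z i + \<alpha>)"
    using prod.ub_add_nat[of 1 l "\<lambda>i. z i + \<alpha>" "d - l"] assms by simp
  also have "(\<Prod>i=l+1..d. z i + \<alpha>) = \<alpha> ^ (d - l)"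
    by (simp add: z_def sylv_point_def)
  also have "(\<Prod>i=1..l. z i + \<alpha>) = (\<Prod>i=1..<l. 1 / real (sylv i) + \<alpha>) * (sylv_gap m - real d * \<alpha>)"
    by (simp add: l z_def sylv_point_def atLeastLessThanSuc_atLeastAtMost[symmetric] algebra_simps)
  finally show ?thesis
    by (simp add: fl_def z_def l inverse_sylv_minus_1)
qed

lemma sum_le_sum_sylv_point:
  assumes x: "reduced_feasible d (1 - v) x" and "1 \<le> l" and "k \<le> d"
  shows "(\<Sum>i=1..k. x i) \<le> (\<Sum>i=1..k. sylv_point l v i)"
proof (cases "k < l")
  case True
  then show ?thesis
    using reduced_feasible_sum_le[OF x assms(3)] sum_sylv_point_less by simp
next
  case False
  have "(\<Sum>i=1..k. x i) \<le> (\<Sum>i=1..d. x i)"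
    using x assms(3) by (intro sum_mono2) (auto simp: reduced_feasible_def)
  then show ?thesis
    using x False sum_sylv_point_ge[OF assms(2), of k v] by (simp add: reduced_feasible_def)
qed

lemma fl_le_prod_reduced_feasible:
  assumes x: "reduced_feasible d (1 - real (d + 1) * \<alpha>) x" and "1 \<le> l" and "l \<le> d"
    and "real (d + 1) * \<alpha> \<le> sylv_gap (l - 1)" and "0 < \<alpha>"
  shows "fl d l \<alpha> \<le> (\<Prod>i=1..d. x i + \<alpha>)"
  unfolding fl_eq_prod_sylv_point[OF assms(2,3)]
proof (rule prod_le_prod_if_partial_sums_le)
  let ?z = "sylv_point l (real (d + 1) * \<alpha>)"
  show "(\<Sum>i=1..k. x i + \<alpha>) \<le> (\<Sum>i=1..k. ?z i + \<alpha>)" if "k \<in> {1..<d}" for k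
    using sum_le_sum_sylv_point[OF x assms(2), of k] that by (simp add: sum.distrib)
  show "(\<Sum>i=1..d. ?z i + \<alpha>) \<le> (\<Sum>i=1..d. x i + \<alpha>)"
    using x sum_sylv_point_ge[OF assms(2,3)] by (simp add: sum.distrib reduced_feasible_def)
qed (use x assms(4,5) sylv_point_nonneg in \<open>auto simp: reduced_feasible_def add_nonneg_pos\<close>)

lemma fl_attained:
  assumes "1 \<le> l" and "l \<le> d" and "0 \<le> \<alpha>"
    and "sylv_gap l \<le> real (d + 1) * \<alpha>" and "real (d + 1) * \<alpha> \<le> sylv_gap (l - 1)"
  shows "\<exists>\<gamma>. feasible d \<gamma> \<and> (\<Prod>i=1..d. \<gamma> i) = fl d l \<alpha>"
proof (intro exI conjI)
  let ?z = "sylv_point l (real (d + 1) * \<alpha>)"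
  show "feasible d (\<lambda>i. if i \<le> d then ?z i + \<alpha> else \<alpha>)"
    using assms by (intro reduced_feasible_imp_feasible reduced_feasible_sylv_point)
  show "(\<Prod>i=1..d. if i \<le> d then ?z i + \<alpha> else \<alpha>) = fl d l \<alpha>"
    using assms(1,2) by (auto simp: fl_eq_prod_sylv_point intro!: prod.cong)
qed

theorem lemma3p2:
  fixes d :: nat and \<beta> :: "nat \<Rightarrow> real"
  assumes "d \<ge> 1" and "optimal d \<beta>"
  shows "\<exists>l\<in>{1..d}. (\<Prod>i=1..d. \<beta> i) = fl d l (\<beta> (d + 1)) \<and>
           1 / (real (d + 1) * (real (sylv (l + 1)) - 1)) \<le> \<beta> (d + 1) \<and>
           \<beta> (d + 1) \<le> 1 / (real (d + 1) * (real (sylv l) - 1))"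
proof -
  define \<alpha> where "\<alpha> = \<beta> (d + 1)"
  have feasible: "feasible d \<beta>"
    and minimal: "\<And>\<gamma>. feasible d \<gamma> \<Longrightarrow> (\<Prod>i=1..d. \<beta> i) \<le> (\<Prod>i=1..d. \<gamma> i)"
    using assms(2) unfolding optimal_def by auto
  have x: "reduced_feasible d (1 - real (d + 1) * \<alpha>) (\<lambda>i. \<beta> i - \<alpha>)"
    using feasible_imp_reduced_feasible[OF feasible] by (simp add: \<alpha>_def)
  obtain l where l: "l \<in> {1..d}" "sylv_gap l \<le> real (d + 1) * \<alpha>" "real (d + 1) * \<alpha> \<le> sylv_gap (l - 1)"
    using sylv_gap_bracket[OF assms(1) reduced_feasible_total_bounds[OF x]] by blast
  have "0 < real (d + 1) * \<alpha>"
    using l(2) sylv_gap_pos[of l] by linarith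
  then have "0 < \<alpha>"
    by (simp add: zero_less_mult_iff)
  have "(\<Prod>i=1..d. \<beta> i) \<le> fl d l \<alpha>"
    using fl_attained[of l d \<alpha>] l \<open>0 < \<alpha>\<close> minimal by force
  moreover have "fl d l \<alpha> \<le> (\<Prod>i=1..d. \<beta> i)"
    using fl_le_prod_reduced_feasible[OF x _ _ l(3) \<open>0 < \<alpha>\<close>] l(1) by simp
  moreover have "sylv_gap l / real (d + 1) \<le> \<alpha>" and "\<alpha> \<le> sylv_gap (l - 1) / real (d + 1)"
    using l(2,3) by (simp_all add: field_simps)
  ultimately show ?thesis
    using l(1) by (intro bexI[of _ l]) (simp_all add: \<alpha>_def inverse_mult_sylv_minus_1)
qed

end
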